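(* Let $\Pi\in\boldsymbol{\Pi}_{q,r}$ and $W\in\mathbb{R}^{q\times p}$ with $W$ of full column rank, and assume $\mathcal{Z}_r^+(\Pi)\neq\emptyset$. Define $\Pi_W:=\begin{bmatrix}W^\top\Pi_{11}W&W^\top\Pi_{12}\\ \Pi_{21}W&\Pi_{22}\end{bmatrix}\in\mathbb{S}^{p+r}$. Then $\mathcal{Z}_r^+(\Pi)W=\mathcal{Z}_r^+(\Pi_W)$.
   Context: $\mathbb{S}^k$ denotes the real symmetric $k\times k$ matrices; for symmetric matrices, $A\ge 0$ ($A>0$) means positive semidefinite (definite). $A^\dagger$ is the Moore–Penrose pseudo-inverse. Any $\Pi\in\mathbb{S}^{q+r}$ is partitioned as $\Pi=\begin{bmatrix}\Pi_{11}&\Pi_{12}\\ \Pi_{21}&\Pi_{22}\end{bmatrix}$ with $\Pi_{11}\in\mathbb{S}^q$, $\Pi_{22}\in\mathbb{S}^r$. The generalized Schur complement is $\Pi\mid\Pi_{22}:=\Pi_{11}-\Pi_{12}\Pi_{22}^\dagger\Pi_{21}$. The set $\boldsymbol{\Pi}_{q,r}$ consists of all $\Pi\in\mathbb{S}^{q+r}$ with $\Pi_{22}\le 0$, $\Pi\mid\Pi_{22}\ge 0$ and $\ker\Pi_{22}\subseteq\ker\Pi_{12}$. Define $\mathcal{Z}_r^+(\Pi)=\{Z\in\mathbb{R}^{r\times q}:\begin{bmatrix}I_q\\ Z\end{bmatrix}^\top\Pi\begin{bmatrix}I_q\\ Z\end{bmatrix}> 0\}$ (analogously $\mathcal{Z}_r^+(\Pi_W)\subseteq\mathbb{R}^{r\times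 p}$ using $I_p$). For $\mathcal{S}\subseteq\mathbb{R}^{r\times q}$, $\mathcal{S}W:=\{SW:S\in\mathcal{S}\}$. *)

theory Defs
  imports "HOL-Analysis.Analysis"
begin

definition sym_mat :: "real^'n^'n \<Rightarrow> bool" where
  "sym_mat A \<longleftrightarrow> transpose A = A"

definition psd :: "real^'n^'n \<Rightarrow> bool" where
  "psd A \<longleftrightarrow> sym_mat A \<and> (\<forall>x. 0 \<le> x \<bullet> (A *v x))"

definition pd :: "real^'n^'n \<Rightarrow> bool" where
  "pd A \<longleftrightarrow> sym_mat A \<and> (\<forall>x. x \<noteq> 0 \<longrightarrow> 0 < x \<bullet> (A *v x))"

definition nsd :: "real^'n^'n \<Rightarrow> bool" where
  "nsd A \<longleftrightarrow> psd (- A)"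

definition pinv :: "real^'n^'m \<Rightarrow> real^'m^'n" where
  "pinv A = (THE X. A ** X ** A = A \<and> X ** A ** X = X \<and>
                    transpose (A ** X) = A ** X \<and> transpose (X ** A) = X ** A)"

definition blk11 :: "real^('q::finite + 'r::finite)^('q + 'r) \<Rightarrow> real^'q^'q" where
  "blk11 P = (\<chi> i j. P $ Inl i $ Inl j)"
definition blk12 :: "real^('q::finite + 'r::finite)^('q + 'r) \<Rightarrow> real^'r^'q" where
  "blk12 P = (\<chi> i j. P $ Inl i $ Inr j)"
definition blk21 :: "real^('q::finite + 'r::finite)^('q + 'r) \<Rightarrow> real^'q^'r" where
  "blk21 P = (\<chi> i j. P $ Inr i $ Inl j)"
definition blk22 :: "real^('q::finite + 'r::finite)^('q + 'r) \<Rightarrow> real^'r^'r" where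
  "blk22 P = (\<chi> i j. P $ Inr i $ Inr j)"

definition blockmat :: "real^'q^'q \<Rightarrow> real^'r^'q \<Rightarrow> real^'q^'r \<Rightarrow> real^'r^'r
    \<Rightarrow> real^('q::finite + 'r::finite)^('q + 'r)" where
  "blockmat A B C D = (\<chi> k l. case k of
       Inl i \<Rightarrow> (case l of Inl j \<Rightarrow> A $ i $ j | Inr j \<Rightarrow> B $ i $ j)
     | Inr i \<Rightarrow> (case l of Inl j \<Rightarrow> C $ i $ j | Inr j \<Rightarrow> D $ i $ j))"

definition schur22 :: "real^('q::finite + 'r::finite)^('q + 'r) \<Rightarrow> real^'q^'q" where
  "schur22 P = blk11 P - blk12 P ** pinv (blk22 P) ** blk21 P"

definition PiSet :: "(real^('q::finite + 'r::finite)^('q + 'r)) set" where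
  "PiSet = {P. sym_mat P \<and> nsd (blk22 P) \<and> psd (schur22 P) \<and>
               (\<forall>v. blk22 P *v v = 0 \<longrightarrow> blk12 P *v v = 0)}"

definition stackI :: "real^'q^'r \<Rightarrow> real^'q^('q::finite + 'r::finite)" where
  "stackI Z = (\<chi> k j. case k of Inl i \<Rightarrow> (if i = j then 1 else 0) | Inr i \<Rightarrow> Z $ i $ j)"

definition Zplus :: "real^('q::finite + 'r::finite)^('q + 'r) \<Rightarrow> (real^'q^'r) set" where
  "Zplus P = {Z. pd (transpose (stackI Z) ** P ** stackI Z)}"

end

theory Submission
  imports Defs
begin

text \<open>Pick \<open>K\<close> with \<open>\<Pi>\<^sub>2\<^sub>2 K = \<Pi>\<^sub>2\<^sub>1\<close> (possible since \<open>ker \<Pi>\<^sub>2\<^sub>2 \<subseteq> ker \<Pi>\<^sub>1\<^sub>2\<close>) and let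
  \<open>S = \<Pi>\<^sub>1\<^sub>1 - \<Pi>\<^sub>1\<^sub>2 K\<close>. Completing the square, the quadratic form of \<open>\<Pi>\<close> at \<open>(x, z)\<close> is
  \<open>(z + Kx)\<^sup>T \<Pi>\<^sub>2\<^sub>2 (z + Kx) + x\<^sup>T S x\<close>; as \<open>\<Pi>\<^sub>2\<^sub>2 \<le> 0\<close>, any \<open>Z\<^sub>0 \<in> \<Z>\<^sup>+(\<Pi>)\<close> forces \<open>S > 0\<close>.
  The inclusion \<open>\<Z>\<^sup>+(\<Pi>) W \<subseteq> \<Z>\<^sup>+(\<Pi>\<^sub>W)\<close> only needs injectivity of \<open>W\<close>. Conversely, given
  \<open>Y \<in> \<Z>\<^sup>+(\<Pi>\<^sub>W)\<close>, split \<open>x = Wu + v\<close> \<open>S\<close>-orthogonally, \<open>u = Ex\<close> with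
  \<open>E = (W\<^sup>T S W)\<^sup>-\<^sup>1 W\<^sup>T S\<close>, and put \<open>Z = (Y + KW) E - K\<close>: then \<open>ZW = Y\<close>, and the form of \<open>\<Pi>\<close>
  at \<open>(x, Zx)\<close> is the form of \<open>\<Pi>\<^sub>W\<close> at \<open>(u, Yu)\<close> plus \<open>v\<^sup>T S v\<close>, which is positive.\<close>

definition block_quad ::
    "real^'q^'q \<Rightarrow> real^'r^'q \<Rightarrow> real^'q^'r \<Rightarrow> real^'r^'r \<Rightarrow> real^'q \<Rightarrow> real^'r \<Rightarrow> real" where
  "block_quad A B C D x z = x \<bullet> (A *v x) + x \<bullet> (B *v z) + z \<bullet> (C *v x) + z \<bullet> (D *v z)"

definition block_Zplus ::
    "real^'q^'q \<Rightarrow> real^'r^'q \<Rightarrow> real^'q^'r \<Rightarrow> real^'r^'r \<Rightarrow> (real^'q^'r) set" where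
  "block_Zplus A B C D = {Z. \<forall>x. x \<noteq> 0 \<longrightarrow> 0 < block_quad A B C D x (Z *v x)}"

lemma sum_UNIV_Plus:
  "sum f (UNIV :: ('a::finite + 'b::finite) set) = sum (f \<circ> Inl) UNIV + sum (f \<circ> Inr) UNIV"
  by (metis UNIV_Plus_UNIV finite sum.Plus)

lemma inner_matrix_transpose: "x \<bullet> (M *v y) = y \<bullet> (transpose M *v (x::real^_))"
  by (metis dot_lmul_matrix inner_commute transpose_matrix_vector)

lemma transpose_eq_iff: "transpose X = Y \<longleftrightarrow> (\<forall>i j. X $ j $ i = Y $ i $ j)"
  by (auto simp: transpose_def vec_eq_iff)

lemma transpose_blocks:
  fixes P :: "real^('q::finite + 'r::finite)^('q + 'r)"
  assumes "sym_mat P"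
  shows "transpose (blk11 P) = blk11 P" "transpose (blk12 P) = blk21 P"
    "transpose (blk22 P) = blk22 P"
proof -
  have "P $ k $ l = P $ l $ k" for k l
    using assms unfolding sym_mat_def transpose_eq_iff by metis
  then show "transpose (blk11 P) = blk11 P" "transpose (blk12 P) = blk21 P"
    "transpose (blk22 P) = blk22 P"
    unfolding transpose_eq_iff blk11_def blk12_def blk21_def blk22_def by simp_all
qed

lemma blocks_blockmat:
  "blk11 (blockmat A B C D) = A" "blk12 (blockmat A B C D) = B"
  "blk21 (blockmat A B C D) = C" "blk22 (blockmat A B C D) = D"
  by (simp_all add: blk11_def blk12_def blk21_def blk22_def blockmat_def vec_eq_iff)

lemma sym_mat_blockmat:
  assumes "transpose A = A" "transpose B = C" "transpose D = D"
  shows "sym_mat (blockmat A B C D)"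
  using assms unfolding sym_mat_def transpose_eq_iff blockmat_def
  by (auto split: sum.splits)

lemma sym_mat_congruence:
  assumes "sym_mat M"
  shows "sym_mat (transpose S ** M ** S)"
  using assms unfolding sym_mat_def by (simp add: matrix_transpose_mul matrix_mul_assoc)

lemma stackI_mult_Inl: "(stackI Z *v x) $ Inl i = x $ i"
proof -
  have "(stackI Z *v x) $ Inl i = (\<Sum>j\<in>UNIV. (if i = j then 1 else 0) * x $ j)"
    unfolding stackI_def matrix_vector_mult_def by simp
  also have "\<dots> = (\<Sum>j\<in>UNIV. if i = j then x $ j else 0)"
    by (rule sum.cong) auto
  finally show ?thesis by simp
qed

lemma stackI_mult_Inr: "(stackI Z *v x) $ Inr i = (Z *v x) $ i"
  unfolding stackI_def matrix_vector_mult_def by simp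

lemma quad_eq_block_quad:
  fixes M :: "real^('q::finite + 'r::finite)^('q + 'r)"
  assumes "\<And>i. s $ Inl i = x $ i" "\<And>i. s $ Inr i = z $ i"
  shows "s \<bullet> (M *v s) = block_quad (blk11 M) (blk12 M) (blk21 M) (blk22 M) x z"
  unfolding block_quad_def inner_vec_def matrix_vector_mult_def
    blk11_def blk12_def blk21_def blk22_def
  by (simp add: sum_UNIV_Plus o_def assms sum_distrib_left sum.distrib algebra_simps)

lemma quad_stackI_congruence:
  fixes M :: "real^('q::finite + 'r::finite)^('q + 'r)"
  shows "x \<bullet> ((transpose (stackI Z) ** M ** stackI Z) *v x)
     = block_quad (blk11 M) (blk12 M) (blk21 M) (blk22 M) x (Z *v x)"
proof -
  have "x \<bullet> ((transpose (stackI Z) ** M ** stackI Z) *v x)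
      = (stackI Z *v x) \<bullet> (M *v (stackI Z *v x))"
    by (metis inner_matrix_transpose matrix_vector_mul_assoc transpose_transpose inner_commute)
  also have "\<dots> = block_quad (blk11 M) (blk12 M) (blk21 M) (blk22 M) x (Z *v x)"
    by (rule quad_eq_block_quad) (simp_all add: stackI_mult_Inl stackI_mult_Inr)
  finally show ?thesis .
qed

lemma Zplus_eq_block_Zplus:
  fixes M :: "real^('q::finite + 'r::finite)^('q + 'r)"
  assumes "sym_mat M"
  shows "Zplus M = block_Zplus (blk11 M) (blk12 M) (blk21 M) (blk22 M)"
  unfolding Zplus_def block_Zplus_def pd_def
  by (auto simp: quad_stackI_congruence sym_mat_congruence[OF assms])

lemma nsd_quad_nonpos:
  assumes "nsd D"
  shows "d \<bullet> (D *v d) \<le> 0"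
proof -
  have "(- D) *v d = - (D *v d)"
    by (simp add: matrix_vector_mult_def vec_eq_iff sum_negf)
  then show ?thesis
    using assms unfolding nsd_def psd_def by (metis inner_minus_right neg_0_le_iff_le)
qed

lemma block_quad_congruence:
  "block_quad (transpose W ** A ** W) (transpose W ** B) (C ** W) D u z
     = block_quad A B C D (W *v u) z"
proof -
  have "u \<bullet> (transpose W *v y) = (W *v u) \<bullet> y" for y
    by (metis inner_matrix_transpose transpose_transpose inner_commute)
  then show ?thesis
    unfolding block_quad_def
    by (simp add: matrix_vector_mul_assoc[symmetric] transpose_matrix_vector inner_commute)
qed

lemma block_quad_shift:
  assumes tA: "transpose A = A" and tB: "transpose B = C" and tD: "transpose D = D"
    and DK: "D ** K = C"
  shows "block_quad A B C D (a + v) (b - K *v v)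
       = block_quad A B C D a b + v \<bullet> ((A - B ** K) *v v) + 2 * (a \<bullet> ((A - B ** K) *v v))"
proof -
  have DKv: "D *v (K *v w) = C *v w" for w by (simp add: matrix_vector_mul_assoc DK)
  have BK: "(B ** K) *v w = B *v (K *v w)" for w by (simp add: matrix_vector_mul_assoc)
  have "v \<bullet> (A *v a) = a \<bullet> (A *v v)" "v \<bullet> (B *v b) = b \<bullet> (C *v v)"
    "(K *v v) \<bullet> (C *v a) = a \<bullet> (B *v (K *v v))" "(K *v v) \<bullet> (D *v b) = b \<bullet> (C *v v)"
    "v \<bullet> (B *v (K *v v)) = (K *v v) \<bullet> (C *v v)"
    by (metis inner_matrix_transpose tA tB tD DKv transpose_transpose)+
  then show ?thesis
    unfolding block_quad_def
    by (simp add: inner_add_left inner_add_right inner_diff_left inner_diff_right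
        matrix_vector_right_distrib matrix_vector_mult_diff_distrib
        matrix_vector_mult_diff_rdistrib BK DKv)
qed

lemma exists_factor_sym_mat:
  fixes D :: "real^'r::finite^'r" and C :: "real^'q::finite^'r"
  assumes tD: "transpose D = D" and ker: "\<And>v. D *v v = 0 \<Longrightarrow> transpose C *v v = 0"
  shows "\<exists>K. D ** K = C"
proof -
  let ?f = "(*v) D"
  have lin: "linear ?f" by (rule matrix_vector_mul_linear)
  have "?f -` {0} = (range ?f)\<^sup>\<bottom>"
    using ker_orthogonal_comp_adjoint[OF lin] adjoint_matrix[of D] tD by simp
  then have range: "(?f -` {0})\<^sup>\<bottom> = range ?f"
    using orthogonal_comp_self[OF linear_subspace_image[OF lin subspace_UNIV]] by simp
  have "\<exists>y. D *v y = C *v w" for w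
  proof -
    have "v \<bullet> (C *v w) = 0" if "D *v v = 0" for v
      using ker[OF that] by (metis inner_matrix_transpose inner_zero_right)
    then have "C *v w \<in> (?f -` {0})\<^sup>\<bottom>"
      unfolding orthogonal_comp_def orthogonal_def by auto
    then show ?thesis using range by auto
  qed
  then obtain g where g: "\<And>w. D *v g w = C *v w" by metis
  have "(D ** (\<chi> i j. g (axis j 1) $ i)) $ i $ j = C $ i $ j" for i j
  proof -
    have "(D ** (\<chi> i j. g (axis j 1) $ i)) $ i $ j = (D *v g (axis j 1)) $ i"
      by (simp add: matrix_matrix_mult_def matrix_vector_mult_def)
    also have "\<dots> = C $ i $ j" by (simp add: g matrix_vector_mult_basis column_def)
    finally show ?thesis .
  qed
  then show ?thesis by (auto simp: vec_eq_iff)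
qed

lemma schur_form_pos:
  assumes tA: "transpose A = A" and tB: "transpose B = C" and tD: "transpose D = D"
    and DK: "D ** K = C" and nsdD: "\<And>d. d \<bullet> (D *v d) \<le> 0"
    and Z0: "Z0 \<in> block_Zplus A B C D" and x0: "x \<noteq> 0"
  shows "0 < x \<bullet> ((A - B ** K) *v x)"
proof -
  define d where "d = Z0 *v x + K *v x"
  have "0 < block_quad A B C D x (Z0 *v x)"
    using Z0 x0 unfolding block_Zplus_def by auto
  also have "block_quad A B C D x (Z0 *v x) = block_quad A B C D (0 + x) (d - K *v x)"
    by (simp add: d_def)
  also have "\<dots> = d \<bullet> (D *v d) + x \<bullet> ((A - B ** K) *v x)"
    unfolding block_quad_shift[OF tA tB tD DK] by (simp add: block_quad_def)
  finally show ?thesis using nsdD[of d] by simp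
qed

lemma exists_orthogonal_left_inverse:
  fixes S :: "real^'q::finite^'q" and W :: "real^'p::finite^'q"
  assumes Spos: "\<And>x. x \<noteq> 0 \<Longrightarrow> 0 < x \<bullet> (S *v x)"
    and injW: "\<And>u. W *v u = 0 \<Longrightarrow> u = 0"
  obtains E where "\<And>u. E *v (W *v u) = u"
    and "\<And>x u. (W *v u) \<bullet> (S *v (x - W *v (E *v x))) = 0"
proof -
  define G where "G = transpose W ** S ** W"
  have WtS: "u \<bullet> (y v* W) = (W *v u) \<bullet> y" for u y
    by (metis dot_lmul_matrix inner_commute)
  have "u = 0" if "G *v u = 0" for u
  proof -
    have "(W *v u) \<bullet> (S *v (W *v u)) = u \<bullet> (G *v u)"
      unfolding G_def by (simp add: matrix_vector_mul_assoc[symmetric] WtS)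
    then have "(W *v u) \<bullet> (S *v (W *v u)) = 0" using that by simp
    then show "u = 0" by (metis Spos injW less_irrefl)
  qed
  then have "inj ((*v) G)"
    using linear_injective_0[OF matrix_vector_mul_linear] by blast
  then obtain Gi where GiG: "Gi ** G = mat 1"
    using matrix_left_invertible_injective by blast
  then have GGi: "G ** Gi = mat 1" using matrix_left_right_inverse by blast
  define E where "E = Gi ** transpose W ** S"
  show thesis
  proof
    show "E *v (W *v u) = u" for u
      using GiG unfolding E_def G_def
      by (simp add: matrix_vector_mul_assoc matrix_mul_assoc)
    have "transpose W *v (S *v (W *v (E *v x))) = (G ** Gi) *v (transpose W *v (S *v x))" for x
      unfolding E_def G_def by (simp add: matrix_vector_mul_assoc matrix_mul_assoc)
    then have "transpose W *v (S *v (x - W *v (E *v x))) = 0" for x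
      using GGi by (simp add: matrix_vector_mult_diff_distrib)
    then show "(W *v u) \<bullet> (S *v (x - W *v (E *v x))) = 0" for x u
      by (metis WtS transpose_matrix_vector inner_zero_right)
  qed
qed

lemma image_mult_block_Zplus_subset:
  assumes injW: "\<And>u. W *v u = 0 \<Longrightarrow> u = 0"
  shows "(\<lambda>Z. Z ** W) ` block_Zplus A B C D
       \<subseteq> block_Zplus (transpose W ** A ** W) (transpose W ** B) (C ** W) D"
  unfolding block_Zplus_def block_quad_congruence
  by (auto simp: matrix_vector_mul_assoc[symmetric] dest: injW)

lemma block_Zplus_subset_image_mult:
  fixes A :: "real^'q::finite^'q" and W :: "real^'p::finite^'q"
  assumes tA: "transpose A = A" and tB: "transpose B = C" and tD: "transpose D = D"
    and DK: "D ** K = C" and nsdD: "\<And>d. d \<bullet> (D *v d) \<le> 0"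
    and injW: "\<And>u. W *v u = 0 \<Longrightarrow> u = 0"
    and Z0: "Z0 \<in> block_Zplus A B C D"
  shows "block_Zplus (transpose W ** A ** W) (transpose W ** B) (C ** W) D
       \<subseteq> (\<lambda>Z. Z ** W) ` block_Zplus A B C D"
proof
  fix Y assume "Y \<in> block_Zplus (transpose W ** A ** W) (transpose W ** B) (C ** W) D"
  then have Y: "0 < block_quad A B C D (W *v u) (Y *v u)" if "u \<noteq> 0" for u
    using that unfolding block_Zplus_def block_quad_congruence by auto
  define S where "S = A - B ** K"
  have Spos: "0 < x \<bullet> (S *v x)" if "x \<noteq> 0" for x
    unfolding S_def using schur_form_pos[OF tA tB tD DK nsdD Z0 that] .
  obtain E where EW: "\<And>u. E *v (W *v u) = u"
    and orth: "\<And>x u. (W *v u) \<bullet> (S *v (x - W *v (E *v x))) = 0"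
    using exists_orthogonal_left_inverse[OF Spos injW] by blast
  define Z where "Z = (Y + K ** W) ** E - K"
  have "Z ** W = Y"
    unfolding matrix_eq Z_def
    by (simp add: matrix_vector_mul_assoc[symmetric] matrix_vector_mult_diff_rdistrib
        matrix_vector_mult_add_rdistrib EW)
  moreover have "Z \<in> block_Zplus A B C D"
    unfolding block_Zplus_def
  proof (intro CollectI allI impI)
    fix x :: "real^'q" assume x0: "x \<noteq> 0"
    define u where "u = E *v x"
    define v where "v = x - W *v u"
    have "Z *v x = Y *v u - K *v v"
      by (simp add: Z_def u_def v_def matrix_vector_mul_assoc[symmetric]
          matrix_vector_mult_diff_rdistrib matrix_vector_mult_add_rdistrib
          matrix_vector_mult_diff_distrib)
    then have "block_quad A B C D x (Z *v x) = block_quad A B C D (W *v u + v) (Y *v u - K *v v)"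
      by (simp add: v_def)
    also have "\<dots> = block_quad A B C D (W *v u) (Y *v u) + v \<bullet> (S *v v)"
      using orth[of u x] unfolding block_quad_shift[OF tA tB tD DK] S_def u_def v_def by simp
    also have "0 < \<dots>"
    proof (cases "u = 0")
      case True
      then show ?thesis using Spos[OF x0] by (simp add: v_def block_quad_def)
    next
      case False
      then show ?thesis using Y Spos[of v] by (cases "v = 0") (auto intro: add_pos_pos)
    qed
    finally show "0 < block_quad A B C D x (Z *v x)" .
  qed
  ultimately show "Y \<in> (\<lambda>Z. Z ** W) ` block_Zplus A B C D" by force
qed

theorem mainTheorem4:
  fixes P :: "real^('q::finite + 'r::finite)^('q + 'r)"
    and W :: "real^'p::finite^'q"
  assumes "P \<in> PiSet"
    and "rank W = CARD('p)"
    and "Zplus P \<noteq> {}"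
  shows "(\<lambda>Z. Z ** W) ` Zplus P
       = Zplus (blockmat (transpose W ** blk11 P ** W) (transpose W ** blk12 P)
                         (blk21 P ** W) (blk22 P))"
proof -
  have symP: "sym_mat P" and nsd: "\<And>d. d \<bullet> (blk22 P *v d) \<le> 0"
    and ker: "\<And>v. blk22 P *v v = 0 \<Longrightarrow> blk12 P *v v = 0"
    using assms(1) nsd_quad_nonpos unfolding PiSet_def by auto
  note tP = transpose_blocks[OF symP]
  have injW: "W *v u = 0 \<Longrightarrow> u = 0" for u
    using assms(2) unfolding full_rank_injective by (metis injD matrix_vector_mult_0_right)
  obtain K where DK: "blk22 P ** K = blk21 P"
    using exists_factor_sym_mat[OF tP(3)] ker tP(2) by (metis transpose_transpose)
  obtain Z0 where "Z0 \<in> block_Zplus (blk11 P) (blk12 P) (blk21 P) (blk22 P)"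
    using assms(3) Zplus_eq_block_Zplus[OF symP] by auto
  from block_Zplus_subset_image_mult[OF tP DK nsd injW this] image_mult_block_Zplus_subset[OF injW]
  have "(\<lambda>Z. Z ** W) ` Zplus P
      = block_Zplus (transpose W ** blk11 P ** W) (transpose W ** blk12 P) (blk21 P ** W) (blk22 P)"
    unfolding Zplus_eq_block_Zplus[OF symP] by blast
  also have "\<dots> = Zplus (blockmat (transpose W ** blk11 P ** W) (transpose W ** blk12 P)
                         (blk21 P ** W) (blk22 P))"
    using tP by (simp add: Zplus_eq_block_Zplus sym_mat_blockmat blocks_blockmat
        matrix_transpose_mul matrix_mul_assoc)
  finally show ?thesis .
qed

end
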